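(* Let $q$ be a power of $2$. Let $b\in\mathbb{F}_q^*$ and $\delta\in\mathbb{F}_{q^2}$ with $b\,\mathrm{Tr}_{q^2/q}(\delta)=1$. Then the compositional inverse of $$P(x)=b(x^q+x+\delta)^{\frac{q^2+q}{2}+1}+x$$ over $\mathbb{F}_{q^2}$ is $$P^{-1}(x)=x+b\left(\mathrm{Tr}_{q^2/q}(\delta)^{-1}(x^q+x)^2+\mathrm{Tr}_{q^2/q}(\delta)^{-1}\delta^{q+1}+\delta\right)^{1+(q^2+q)/2}.$$
   Context: $\mathrm{Tr}_{q^2/q}(y)=y+y^q$. The compositional inverse of a permutation polynomial $f$ of $\mathbb{F}_{Q}$ is the unique polynomial $f^{-1}$ (modulo $x^Q-x$) with $f(f^{-1}(c))=f^{-1}(f(c))=c$ for all $c\in\mathbb{F}_Q$; in particular the statement includes that $P$ permutes $\mathbb{F}_{q^2}$. *)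

theory Defs
  imports Main
begin

text \<open>Relative trace from F_{q^2} to F_q, on a field type of cardinality q^2.\<close>
definition tr2 :: "nat \<Rightarrow> 'a::field \<Rightarrow> 'a" where
  "tr2 q y = y + y ^ q"

end

theory Submission
  imports Defs "HOL-Computational_Algebra.Primes"
begin

text \<open>
  Put \<open>T = x^q + x\<close>, \<open>u = T + \<delta>\<close> and \<open>t = Tr(\<delta>)\<close>. Both \<open>T\<close> and the norm
  \<open>N = u^(q+1)\<close> lie in \<open>F_q\<close>, and since \<open>(q^2 + q)/2 = (q + 1) q/2\<close> the map becomes
  \<open>P(x) = x + b s u\<close> with \<open>s = N^(q/2) \<in> F_q\<close> the square root of \<open>N\<close>. Taking traces
  and using \<open>b t = 1\<close> gives \<open>Tr(P(x)) = s + T\<close>, whose square \<open>N + T^2 = t T + \<delta>^(q+1)\<close>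
  determines \<open>T\<close>, hence \<open>u\<close> and the summand \<open>b s u\<close>, from \<open>P(x)\<close> alone. Thus the
  claimed inverse is a left inverse, and on a finite set that makes \<open>P\<close> a bijection.
\<close>

text \<open>
  The library's \<open>finite_field_power_card_eq_same\<close> is stated for the sort \<open>finite_field\<close>,
  which a type variable of sort \<open>{field,finite}\<close> does not carry.
\<close>

lemma finite_field_power_card_eq_self:
  fixes x :: "'a::{field,finite}"
  shows "x ^ card (UNIV :: 'a set) = x"
proof (cases "x = 0")
  case False
  have "x * (\<Prod>y\<in>UNIV-{0}. x * y) = x ^ Suc (card (UNIV :: 'a set) - 1) * \<Prod>(UNIV-{0})"
    by (simp add: prod.distrib mult_ac)
  also have "Suc (card (UNIV :: 'a set) - 1) = card (UNIV :: 'a set)"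
    using finite_UNIV_card_ge_0[where ?'a = 'a] by simp
  also have "(\<Prod>y\<in>UNIV-{0}. x * y) = (\<Prod>y\<in>UNIV-{0}. y)"
    by (rule prod.reindex_bij_witness[of _ "\<lambda>y. y / x" "\<lambda>y. x * y"]) (use False in auto)
  finally show ?thesis
    by simp
qed (use finite_UNIV_card_ge_0[where ?'a = 'a] in auto)

lemma finite_field_CHAR_eq_2_if_even_card:
  assumes "even (card (UNIV :: 'a::{field,finite} set))"
  shows "CHAR('a) = 2"
proof -
  have "(-1 :: 'a) = 1"
    using finite_field_power_card_eq_self[of "-1 :: 'a"] assms by simp
  then have "of_nat 2 = (0 :: 'a)"
    by (metis of_nat_numeral one_add_one neg_eq_iff_add_eq_0)
  then have "CHAR('a) dvd 2"
    by (simp only: of_nat_eq_0_iff_char_dvd)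
  then show ?thesis
    using CHAR_not_1
    by (metis One_nat_def dvd_antisym dvd_refl nat_dvd_1_iff_1 two_is_prime_nat prime_nat_iff)
qed

lemma card_UNIV_field_neq_1: "card (UNIV :: 'a::{field,finite} set) \<noteq> 1"
  by (metis card_1_singletonE singletonD UNIV_I zero_neq_one)

lemma finite_left_inverse_imp_bij:
  fixes f g :: "'a::finite \<Rightarrow> 'a"
  assumes "\<And>x. g (f x) = x"
  shows "bij f \<and> (\<forall>c. f (g c) = c)"
proof -
  have "bij f"
    using assms by (metis bijI finite_UNIV_inj_surj finite_class.finite_UNIV injI)
  then show ?thesis
    using assms by (metis bij_pointE)
qed

definition perm_poly :: "nat \<Rightarrow> 'a::field \<Rightarrow> 'a \<Rightarrow> 'a \<Rightarrow> 'a" where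
  "perm_poly q b \<delta> x = b * (x ^ q + x + \<delta>) ^ ((q ^ 2 + q) div 2 + 1) + x"

definition perm_poly_inv :: "nat \<Rightarrow> 'a::field \<Rightarrow> 'a \<Rightarrow> 'a \<Rightarrow> 'a" where
  "perm_poly_inv q b \<delta> x = x + b * (inverse (tr2 q \<delta>) * (x ^ q + x) ^ 2
     + inverse (tr2 q \<delta>) * \<delta> ^ (q + 1) + \<delta>) ^ (1 + (q ^ 2 + q) div 2)"

context
  fixes q k :: nat
  assumes char_2: "CHAR('a::field) = 2"
    and q_pow: "q = 2 ^ k" and k_pos: "k > 0"
    and power_q_square: "\<And>x :: 'a. x ^ q ^ 2 = x"
begin

lemma two_eq_zero: "(2 :: 'a) = 0"
  using of_nat_CHAR[where ?'a = 'a] char_2 by simp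

lemma frobenius_add: "(x + y :: 'a) ^ q = x ^ q + y ^ q"
  using q_pow char_2 by (intro freshmans_dream') auto

lemma frobenius_involution: "((x :: 'a) ^ q) ^ q = x"
  using power_q_square[of x] by (simp add: power_mult[symmetric] power2_eq_square)

lemma tr2_add: "tr2 q (x + y :: 'a) = tr2 q x + tr2 q y"
  by (simp add: tr2_def frobenius_add algebra_simps)

lemma tr2_in_base: "tr2 q (x :: 'a) ^ q = tr2 q x"
  by (simp add: tr2_def frobenius_add frobenius_involution add.commute)

lemma tr2_eq_0_if_in_base:
  assumes "(c :: 'a) ^ q = c"
  shows "tr2 q c = 0"
  using assms two_eq_zero by (simp add: tr2_def mult_2[symmetric])

lemma tr2_mult_in_base:
  assumes "(c :: 'a) ^ q = c"
  shows "tr2 q (c * x) = c * tr2 q x"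
  using assms by (simp add: tr2_def power_mult_distrib algebra_simps)

lemma norm_in_base: "((u :: 'a) ^ (q + 1)) ^ q = u ^ (q + 1)"
  by (simp add: power_mult_distrib frobenius_involution mult.commute)

lemma square_root_in_base:
  assumes "(N :: 'a) ^ q = N"
  shows "(N ^ (q div 2)) ^ 2 = N" and "(N ^ (q div 2)) ^ q = N ^ (q div 2)"
proof -
  have "2 * (q div 2) = q"
    using q_pow k_pos by (cases k) auto
  then show "(N ^ (q div 2)) ^ 2 = N"
    using assms by (metis power_mult mult.commute)
  show "(N ^ (q div 2)) ^ q = N ^ (q div 2)"
    using assms by (metis power_mult mult.commute)
qed

lemma power_half_norm_mult: "(u :: 'a) ^ ((q ^ 2 + q) div 2 + 1) = (u ^ (q + 1)) ^ (q div 2) * u"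
proof -
  have "(q ^ 2 + q) div 2 = (q + 1) * (q div 2)"
    using q_pow k_pos by (cases k) (auto simp: power2_eq_square algebra_simps)
  then have "u ^ ((q ^ 2 + q) div 2 + 1) = u ^ ((q + 1) * (q div 2)) * u"
    by simp
  then show ?thesis
    by (simp only: power_mult)
qed

lemma perm_poly_inv_perm_poly:
  fixes b \<delta> x :: 'a
  assumes b_in_base: "b ^ q = b" and tr_cond: "b * tr2 q \<delta> = 1"
  shows "perm_poly_inv q b \<delta> (perm_poly q b \<delta> x) = x"
proof -
  define T where "T = tr2 q x"
  define u where "u = T + \<delta>"
  define s where "s = (u ^ (q + 1)) ^ (q div 2)"
  define t where "t = tr2 q \<delta>"
  note s_square = square_root_in_base(1)[OF norm_in_base, of u, folded s_def]
  note s_in_base = square_root_in_base(2)[OF norm_in_base, of u, folded s_def]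
  have T_in_base: "T ^ q = T"
    unfolding T_def by (rule tr2_in_base)
  note power_u = power_half_norm_mult[of u, folded s_def]
  define y where "y = perm_poly q b \<delta> x"
  have u_eq: "x ^ q + x + \<delta> = u"
    by (simp add: u_def T_def tr2_def add.commute)
  have y_eq: "y = b * s * u + x"
    unfolding y_def perm_poly_def u_eq power_u by (simp add: mult.assoc)
  have "tr2 q y = b * s * t + T"
    using tr2_eq_0_if_in_base[OF T_in_base] b_in_base s_in_base
    by (simp add: y_eq tr2_add tr2_mult_in_base u_def t_def T_def power_mult_distrib)
  then have tr2_y: "tr2 q y = s + T"
    using tr_cond by (simp add: t_def mult.commute mult.left_commute)
  have "u ^ (q + 1) = T ^ 2 + t * T + \<delta> ^ (q + 1)"
    using T_in_base two_eq_zero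
    by (simp add: u_def t_def tr2_def frobenius_add power2_eq_square algebra_simps)
  then have "tr2 q y ^ 2 = t * T + \<delta> ^ (q + 1)"
    using s_square two_eq_zero by (simp add: tr2_y power2_sum algebra_simps mult_2[symmetric])
  moreover have "t \<noteq> 0"
    using tr_cond by (auto simp: t_def)
  ultimately have "inverse t * tr2 q y ^ 2 + inverse t * \<delta> ^ (q + 1)
      = T + 2 * (inverse t * \<delta> ^ (q + 1))"
    by (simp add: field_simps)
  then have u_from_y: "inverse t * (y ^ q + y) ^ 2 + inverse t * \<delta> ^ (q + 1) + \<delta> = u"
    using two_eq_zero by (simp add: tr2_def u_def add.commute)
  have "perm_poly_inv q b \<delta> y = y + b * (s * u)"
    unfolding perm_poly_inv_def t_def[symmetric] u_from_y add.commute[of 1] power_u ..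
  also have "\<dots> = x"
    using two_eq_zero by (simp add: y_eq mult_2[symmetric] algebra_simps)
  finally show ?thesis
    by (simp add: y_def)
qed

end

theorem theorem3p4:
  fixes q k :: nat and b \<delta> :: "'a::{field,finite}"
    and P Pinv :: "'a \<Rightarrow> 'a"
  assumes q_pow: "q = 2 ^ k"
    and card: "card (UNIV :: 'a set) = q ^ 2"
    and b_Fq: "b ^ q = b" and b_nz: "b \<noteq> 0"
    and tr_cond: "b * tr2 q \<delta> = 1"
    and P_def: "\<And>x. P x = b * (x ^ q + x + \<delta>) ^ ((q ^ 2 + q) div 2 + 1) + x"
    and Pinv_def: "\<And>x. Pinv x = x + b * (inverse (tr2 q \<delta>) * (x ^ q + x) ^ 2
                     + inverse (tr2 q \<delta>) * \<delta> ^ (q + 1) + \<delta>) ^ (1 + (q ^ 2 + q) div 2)"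
  shows "bij P \<and> (\<forall>c. P (Pinv c) = c) \<and> (\<forall>c. Pinv (P c) = c)"
proof -
  have "k > 0"
    using card q_pow card_UNIV_field_neq_1[where ?'a = 'a] by (cases k) auto
  moreover have char_2: "CHAR('a) = 2"
    using card q_pow \<open>k > 0\<close> by (intro finite_field_CHAR_eq_2_if_even_card) simp
  moreover have "\<And>x :: 'a. x ^ q ^ 2 = x"
    using finite_field_power_card_eq_self by (metis card)
  ultimately have "Pinv (P x) = x" for x
    using perm_poly_inv_perm_poly[OF char_2 q_pow \<open>k > 0\<close> _ b_Fq tr_cond]
    by (simp add: P_def Pinv_def perm_poly_def perm_poly_inv_def)
  then show ?thesis
    using finite_left_inverse_imp_bij by blast
qed

end
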